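(* (i) For every $y\ge R$, the function $\lambda\mapsto\mathscr u(\lambda,y)$ is strictly decreasing on $(0,\infty)$. (ii) For every $u>0$ and $y\ge R$ there exists a unique $\lambda>0$ such that $u=\mathscr u(\lambda,y)$.
   Context: Fix an integer $d\ge 2$, a bounded domain $D_b\subset\mathbb R^{d-1}$ with smooth boundary, and $R>0$. Assume that $D_b$ satisfies the inner ball condition with radius $R$: for every $x\in\partial D_b$ there is a unique open $(d-1)$-dimensional ball of radius $R$ contained in $D_b$ whose boundary is tangent to $\partial D_b$ at $x$, and $x$ is the only point of intersection of that ball's boundary with $\partial D_b$. Let $D=D_b\times[0,\infty)\subset\mathbb R^d$, and assume a closed ball of radius $R$ fits in the interior of $D$. $\mathcal B(z,r)$ denotes the open ball with center $z$ and radius $r$. Let $D_b'=\{x\in D_b:\mathcal B((x,y),R)\subset D\text{ for all }y>R\}$. For $\gamma>0$, $y\ge R$ and integers $k\ge0$, let $$\mathscr h_k(\gamma,y)=\int_{D\setminus\mathcal B((\tilde x,y),R)}\gamma r^ke^{-\gamma r}\,dx\,dr,$$ where $\tilde x\in D_b'$ is arbitrary (the value does not depend on the choice), $x\in\mathbb R^{d-1}$ is the horizontal coordinate and $r$ the vertical coordinate, with Lebesgue measures $dx$ and $dr$. Set $\mathscr u=\mathscr h_1/\mathscr h_0$. *)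

theory Defs
  imports "HOL-Analysis.Analysis"
begin

text \<open>Horizontal space R^(d-1) is modelled as real^'n (so d - 1 = CARD('n) \<ge> 1, i.e. d \<ge> 2);
  points of R^d are pairs (x, r) :: real^'n \<times> real (horizontal, vertical), with the
  Euclidean (product) metric.\<close>

fun pderivs :: "'n::finite list \<Rightarrow> (real^'n \<Rightarrow> real) \<Rightarrow> real^'n \<Rightarrow> real" where
  "pderivs [] f = f"
| "pderivs (i # is) f = (\<lambda>x. deriv (\<lambda>t. pderivs is f (x + t *\<^sub>R axis i 1)) 0)"

definition smooth_on :: "(real^'n::finite) set \<Rightarrow> (real^'n \<Rightarrow> real) \<Rightarrow> bool" where
  "smooth_on U f \<longleftrightarrow>
     (\<forall>is. continuous_on U (pderivs is f) \<and>
        (\<forall>i. \<forall>x\<in>U. (\<lambda>t. pderivs is f (x + t *\<^sub>R axis i 1)) differentiable (at 0)))"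

definition smooth_boundary :: "(real^'n::finite) set \<Rightarrow> bool" where
  "smooth_boundary \<Omega> \<longleftrightarrow>
     (\<forall>p\<in>frontier \<Omega>. \<exists>U \<phi>. open U \<and> p \<in> U \<and> smooth_on U \<phi> \<and>
        (\<forall>x\<in>U. \<exists>i. pderivs [i] \<phi> x \<noteq> 0) \<and>
        \<Omega> \<inter> U = {x\<in>U. \<phi> x < 0})"

definition inner_ball_condition :: "(real^'n::finite) set \<Rightarrow> real \<Rightarrow> bool" where
  "inner_ball_condition \<Omega> R \<longleftrightarrow>
     (\<forall>x\<in>frontier \<Omega>. \<exists>!c. ball c R \<subseteq> \<Omega> \<and> sphere c R \<inter> frontier \<Omega> = {x})"

definition cyl :: "(real^'n::finite) set \<Rightarrow> ((real^'n) \<times> real) set" where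
  "cyl Db = Db \<times> {0..}"

definition Db' :: "(real^'n::finite) set \<Rightarrow> real \<Rightarrow> (real^'n) set" where
  "Db' Db R = {x\<in>Db. \<forall>y>R. ball (x, y) R \<subseteq> cyl Db}"

definition hk :: "(real^'n::finite) set \<Rightarrow> real \<Rightarrow> real^'n \<Rightarrow> nat \<Rightarrow> real \<Rightarrow> real \<Rightarrow> real" where
  "hk Db R xt k \<gamma> y =
     set_lebesgue_integral lborel (cyl Db - ball (xt, y) R)
       (\<lambda>(x, r). \<gamma> * r ^ k * exp (- \<gamma> * r))"

definition uu :: "(real^'n::finite) set \<Rightarrow> real \<Rightarrow> real^'n \<Rightarrow> real \<Rightarrow> real \<Rightarrow> real" where
  "uu Db R xt \<gamma> y = hk Db R xt 1 \<gamma> y / hk Db R xt 0 \<gamma> y"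

end

theory Submission
  imports Defs "HOL-Probability.Sinc_Integral"
begin

(*
  Under the weight exp (- \<gamma> r), the quotient uu is the mean height of the region
  S = cyl Db - ball (xt, y) R.  Raising \<gamma> tilts the weight by a factor decreasing in r,
  which strictly lowers the mean because S has mass at more than one height; the mean is
  continuous in \<gamma>, the moments being Lipschitz in \<gamma> away from 0.  Since S contains
  the vertical tail ball xt R \<times> {y + R<..}, a small \<gamma> pushes the mean above any u > 0,
  and since S has positive mass arbitrarily close to the floor r = 0, a large \<gamma> pushes it
  below u.  The intermediate value theorem and strict monotonicity give the unique \<gamma>.
*)

lemma Times_in_sets_borel:
  fixes A :: "'a::euclidean_space set" and B :: "'b::euclidean_space set"
  assumes "A \<in> sets borel" "B \<in> sets borel"
  shows "A \<times> B \<in> sets borel"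
  by (metis assms borel_prod pair_measureI)

lemma emeasure_lborel_Times:
  fixes A :: "'a::euclidean_space set" and B :: "'b::euclidean_space set"
  assumes "A \<in> sets borel" "B \<in> sets borel"
  shows "emeasure lborel (A \<times> B) = emeasure lborel A * emeasure lborel B"
  using assms by (simp add: lborel_prod[symmetric] lborel.emeasure_pair_measure_Times)

lemma measure_lborel_Times:
  fixes A :: "'a::euclidean_space set" and B :: "'b::euclidean_space set"
  assumes "A \<in> sets borel" "B \<in> sets borel"
  shows "measure lborel (A \<times> B) = measure lborel A * measure lborel B"
  using assms by (simp add: measure_def emeasure_lborel_Times enn2real_mult)

lemma integrable_lborel_mult_fst_snd:
  fixes f :: "'a::euclidean_space \<Rightarrow> real" and g :: "'b::euclidean_space \<Rightarrow> real"
  assumes f: "integrable lborel f" and g: "integrable lborel g"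
  shows "integrable lborel (\<lambda>p::'a \<times> 'b. f (fst p) * g (snd p))"
proof -
  have [measurable]: "f \<in> borel_measurable borel" "g \<in> borel_measurable borel"
    using f g by auto
  have "(\<integral>\<^sup>+ p. ennreal (norm (f (fst p) * g (snd p))) \<partial>(lborel \<Otimes>\<^sub>M lborel))
     = (\<integral>\<^sup>+ x. \<integral>\<^sup>+ y. ennreal (norm (f x)) * ennreal (norm (g y)) \<partial>lborel \<partial>lborel)"
    by (subst lborel.nn_integral_fst[symmetric]) (auto simp: abs_mult ennreal_mult)
  also have "\<dots> = (\<integral>\<^sup>+ x. ennreal (norm (f x)) \<partial>lborel) * (\<integral>\<^sup>+ y. ennreal (norm (g y)) \<partial>lborel)"
    by (simp add: nn_integral_cmult nn_integral_multc)
  also have "\<dots> < \<infinity>"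
    using f g unfolding integrable_iff_bounded by (simp add: ennreal_mult_less_top)
  finally show ?thesis
    unfolding lborel_prod[symmetric] integrable_iff_bounded by simp
qed

lemma integrable_power_mult_exp_neg_Ici:
  fixes \<gamma> :: real
  assumes "\<gamma> > 0"
  shows "integrable lborel (\<lambda>r::real. indicator {0..} r * (r ^ k * exp (- \<gamma> * r)))"
proof -
  let ?h = "\<lambda>x::real. x ^ k * exp (- x) * indicator {0..} x"
  have "integrable lborel ?h"
    using has_bochner_integral_I0i_power_exp_m'[of k] by (auto intro: integrable.intros)
  then have "integrable lborel (\<lambda>r. ?h (0 + \<gamma> * r) / \<gamma> ^ k)"
    using lborel_integrable_real_affine_iff[of \<gamma> ?h 0] assms by simp
  moreover have "?h (0 + \<gamma> * r) / \<gamma> ^ k = indicator {0..} r * (r ^ k * exp (- \<gamma> * r))" for r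
    using assms by (simp add: indicator_def zero_le_mult_iff power_mult_distrib)
  ultimately show ?thesis by simp
qed

lemma integral_less_of_less_on_positive_set:
  fixes f g :: "'a \<Rightarrow> real"
  assumes f: "integrable M f" and g: "integrable M g" and le: "\<And>x. f x \<le> g x"
    and A: "A \<in> sets M" "emeasure M A \<noteq> 0" and less: "\<And>x. x \<in> A \<Longrightarrow> f x < g x"
  shows "integral\<^sup>L M f < integral\<^sup>L M g"
proof -
  have int_diff: "integrable M (\<lambda>x. g x - f x)" using f g by simp
  have "integral\<^sup>L M (\<lambda>x. g x - f x) \<noteq> 0"
  proof
    assume "integral\<^sup>L M (\<lambda>x. g x - f x) = 0"
    then have "AE x in M. g x - f x = 0"
      using integral_nonneg_eq_0_iff_AE[OF int_diff] le by (simp add: algebra_simps)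
    then have "AE x in M. x \<notin> A" by eventually_elim (use less in force)
    then show False
      using AE_iff_measurable[of A M "\<lambda>x. x \<notin> A"] A sets.sets_into_space[OF A(1)] by auto
  qed
  moreover have "integral\<^sup>L M (\<lambda>x. g x - f x) \<ge> 0"
    using le by (intro integral_nonneg_AE AE_I2) (simp add: algebra_simps)
  ultimately show ?thesis using f g by simp
qed

lemma abs_exp_neg_mult_diff_le:
  fixes \<gamma> \<gamma>' \<gamma>\<^sub>0 r :: real
  assumes "\<gamma>\<^sub>0 \<le> \<gamma>" "\<gamma>\<^sub>0 \<le> \<gamma>'" "0 \<le> r"
  shows "\<bar>exp (- \<gamma> * r) - exp (- \<gamma>' * r)\<bar> \<le> \<bar>\<gamma> - \<gamma>'\<bar> * (r * exp (- \<gamma>\<^sub>0 * r))"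
proof -
  have ordered: "exp (- a * r) - exp (- b * r) \<le> (b - a) * (r * exp (- \<gamma>\<^sub>0 * r))"
    if "\<gamma>\<^sub>0 \<le> a" "a \<le> b" for a b
  proof -
    have "exp (- a * r) - exp (- b * r) = exp (- a * r) * (1 - exp (- ((b - a) * r)))"
      by (simp add: algebra_simps flip: exp_add)
    also have "\<dots> \<le> exp (- a * r) * ((b - a) * r)"
      using exp_ge_add_one_self[of "- ((b - a) * r)"] by (intro mult_left_mono) auto
    also have "\<dots> \<le> exp (- \<gamma>\<^sub>0 * r) * ((b - a) * r)"
      using that assms by (intro mult_right_mono) (auto intro: mult_right_mono)
    finally show ?thesis by (simp add: algebra_simps)
  qed
  have antimono: "exp (- b * r) \<le> exp (- a * r)" if "a \<le> b" for a b
    using that assms by (auto intro: mult_right_mono)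
  show ?thesis
    using ordered[of \<gamma> \<gamma>'] ordered[of \<gamma>' \<gamma>] antimono[of \<gamma> \<gamma>'] antimono[of \<gamma>' \<gamma>] assms
    by (cases "\<gamma> \<le> \<gamma>'") (simp_all add: abs_if)
qed

lemma diff_mult_exp_neg_less:
  fixes c r m :: real
  assumes "c > 0" "r \<noteq> m"
  shows "(r - m) * exp (- c * r) < (r - m) * exp (- c * m)"
proof (cases "m < r")
  case True
  then show ?thesis using assms by (intro mult_strict_left_mono) auto
next
  case False
  then show ?thesis using assms by (intro mult_strict_left_mono_neg) auto
qed

lemma diff_mult_exp_neg_le:
  fixes c r m :: real
  assumes "c \<ge> 0"
  shows "(r - m) * exp (- c * r) \<le> (r - m) * exp (- c * m)"
  using diff_mult_exp_neg_less[of c r m] assms by (cases "c = 0 \<or> r = m") auto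

lemma emeasure_annulus_pos:
  fixes c :: "'a::euclidean_space"
  assumes "0 \<le> \<rho>" "\<rho> < R"
  shows "0 < emeasure lborel (ball c R - cball c \<rho>)"
proof -
  obtain b :: 'a where b: "norm b = 1" using nonempty_Basis norm_Basis by blast
  define z where "z = c + ((\<rho> + R) / 2) *\<^sub>R b"
  define d where "d = (R - \<rho>) / 2"
  have "dist c z = (\<rho> + R) / 2" using assms b by (simp add: z_def dist_norm)
  have "ball z d \<subseteq> ball c R - cball c \<rho>"
  proof
    fix w assume "w \<in> ball z d"
    moreover have "dist c w \<le> dist c z + dist z w" "dist c z \<le> dist c w + dist z w"
      using dist_triangle[of c w z] dist_triangle[of c z w] by (simp_all add: dist_commute)
    ultimately show "w \<in> ball c R - cball c \<rho>"
      using \<open>dist c z = (\<rho> + R) / 2\<close> by (simp add: d_def; linarith)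
  qed
  moreover have "0 < emeasure lborel (ball z d)"
    using content_ball_pos[of d z] emeasure_lborel_ball_finite[of z d] assms
    by (simp add: d_def emeasure_eq_ennreal_measure)
  ultimately show ?thesis
    using emeasure_mono[of "ball z d" "ball c R - cball c \<rho>" lborel] by auto
qed

definition moment_density :: "('a \<times> real) set \<Rightarrow> nat \<Rightarrow> real \<Rightarrow> 'a \<times> real \<Rightarrow> real" where
  "moment_density S k \<gamma> p = indicator S p * (snd p ^ k * exp (- \<gamma> * snd p))"

definition vertical_moment :: "('a::euclidean_space \<times> real) set \<Rightarrow> nat \<Rightarrow> real \<Rightarrow> real" where
  "vertical_moment S k \<gamma> = integral\<^sup>L lborel (moment_density S k \<gamma>)"

definition mean_height :: "('a::euclidean_space \<times> real) set \<Rightarrow> real \<Rightarrow> real" where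
  "mean_height S \<gamma> = vertical_moment S 1 \<gamma> / vertical_moment S 0 \<gamma>"

lemma centered_density_eq:
  "indicator S p * ((snd p - m) * exp (- \<gamma> * snd p))
     = moment_density S 1 \<gamma> p - m * moment_density S 0 \<gamma> p"
  by (simp add: moment_density_def algebra_simps)

locale tailed_region =
  fixes S :: "('a::euclidean_space \<times> real) set" and D B :: "'a set" and T :: real
  assumes S_borel [measurable]: "S \<in> sets borel"
    and S_subset: "S \<subseteq> D \<times> {0..}"
    and D_borel [measurable]: "D \<in> sets borel"
    and D_finite: "emeasure lborel D < \<infinity>"
    and B_borel [measurable]: "B \<in> sets borel"
    and B_pos: "0 < emeasure lborel B"
    and tail_subset: "B \<times> {T<..} \<subseteq> S"
    and bottom_pos: "\<And>e. e > 0 \<Longrightarrow> 0 < emeasure lborel (S \<inter> UNIV \<times> {..e})"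
begin

lemma B_finite: "emeasure lborel B < \<infinity>"
proof -
  have "B \<subseteq> D" using tail_subset S_subset by (force dest: subsetD[where c = "(_, T + 1)"])
  then show ?thesis using D_finite emeasure_mono[of B D lborel] by auto
qed

lemma tail_slab:
  assumes "T \<le> c" "0 \<le> l"
  shows "B \<times> {c<..<c + l} \<subseteq> S" and "measure lborel (B \<times> {c<..<c + l}) = measure lborel B * l"
  using assms tail_subset by (auto simp: measure_lborel_Times)

lemma moment_density_borel [measurable]: "moment_density S k \<gamma> \<in> borel_measurable borel"
proof -
  have [measurable]: "(\<lambda>p::'a \<times> real. snd p ^ k * exp (- \<gamma> * snd p)) \<in> borel_measurable borel"
    by (intro borel_measurable_continuous_onI continuous_intros)
  show ?thesis unfolding moment_density_def by measurable
qed

lemma integrable_moment_density: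
  assumes "\<gamma> > 0"
  shows "integrable lborel (moment_density S k \<gamma>)"
proof (rule Bochner_Integration.integrable_bound)
  show "integrable lborel (\<lambda>p. indicator D (fst p) * (indicator {0..} (snd p) * (snd p ^ k * exp (- \<gamma> * snd p))))"
    using D_finite integrable_power_mult_exp_neg_Ici[OF assms]
    by (intro integrable_lborel_mult_fst_snd) auto
  show "AE p in lborel. norm (moment_density S k \<gamma> p)
          \<le> norm (indicator D (fst p) * (indicator {0..} (snd p) * (snd p ^ k * exp (- \<gamma> * snd p))))"
    using S_subset by (intro AE_I2) (auto simp: moment_density_def indicator_def)
qed simp

lemma integrable_centered_density:
  assumes "\<gamma> > 0"
  shows "integrable lborel (\<lambda>p. indicator S p * ((snd p - m) * exp (- \<gamma> * snd p)))"
  unfolding centered_density_eq using integrable_moment_density[OF assms] by simp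

lemma vertical_moment_centered:
  assumes "\<gamma> > 0"
  shows "vertical_moment S 1 \<gamma> - m * vertical_moment S 0 \<gamma>
           = (\<integral>p. indicator S p * ((snd p - m) * exp (- \<gamma> * snd p)) \<partial>lborel)"
  unfolding centered_density_eq vertical_moment_def using integrable_moment_density[OF assms] by simp

lemma vertical_moment_pos:
  assumes "\<gamma> > 0"
  shows "0 < vertical_moment S 0 \<gamma>"
proof -
  have "integral\<^sup>L lborel (\<lambda>_ :: 'a \<times> real. 0) < vertical_moment S 0 \<gamma>"
    unfolding vertical_moment_def
  proof (rule integral_less_of_less_on_positive_set)
    show "integrable lborel (moment_density S 0 \<gamma>)" using integrable_moment_density[OF assms] .
    show "0 \<le> moment_density S 0 \<gamma> p" for p by (simp add: moment_density_def)
    show "B \<times> {T<..<T + 1} \<in> sets lborel" by (simp add: Times_in_sets_borel)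
    show "emeasure lborel (B \<times> {T<..<T + 1}) \<noteq> 0"
      using B_pos by (simp add: emeasure_lborel_Times)
    show "0 < moment_density S 0 \<gamma> p" if "p \<in> B \<times> {T<..<T + 1}" for p
    proof -
      have "p \<in> S" using that tail_subset by auto
      then show ?thesis by (simp add: moment_density_def)
    qed
  qed simp
  then show ?thesis by simp
qed

lemma mean_height_less_iff:
  assumes "\<gamma> > 0"
  shows "mean_height S \<gamma> < m \<longleftrightarrow> vertical_moment S 1 \<gamma> - m * vertical_moment S 0 \<gamma> < 0"
  using vertical_moment_pos[OF assms] by (simp add: mean_height_def divide_less_eq)

lemma mean_height_greater_iff:
  assumes "\<gamma> > 0"
  shows "m < mean_height S \<gamma> \<longleftrightarrow> 0 < vertical_moment S 1 \<gamma> - m * vertical_moment S 0 \<gamma>"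
  using vertical_moment_pos[OF assms] by (simp add: mean_height_def less_divide_eq)

text \<open>Tilting the weight from \<open>exp (- a r)\<close> to \<open>exp (- b r)\<close> multiplies it by a factor that
  decreases in \<open>r\<close>; against \<open>r - m\<close>, centred at the mean height \<open>m\<close> for \<open>a\<close>, this can
  only lower the integral, and strictly so because \<open>S\<close> has mass away from height \<open>m\<close>.\<close>

lemma mean_height_strict_antimono:
  assumes "0 < a" "a < b"
  shows "mean_height S b < mean_height S a"
proof -
  define m where "m = mean_height S a"
  define c where "c = max T m"
  have tilt: "(r - m) * exp (- b * r) = (r - m) * exp (- (b - a) * r) * exp (- a * r)" for r
    by (simp add: algebra_simps flip: exp_add)
  have tilt_le: "(r - m) * exp (- b * r) \<le> exp (- (b - a) * m) * ((r - m) * exp (- a * r))" for r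
  proof -
    have "(r - m) * exp (- b * r) = (r - m) * exp (- (b - a) * r) * exp (- a * r)" by (rule tilt)
    also have "\<dots> \<le> (r - m) * exp (- (b - a) * m) * exp (- a * r)"
      using diff_mult_exp_neg_le[of "b - a" r m] assms by (intro mult_right_mono) auto
    finally show ?thesis by (simp only: ac_simps)
  qed
  have tilt_less: "(r - m) * exp (- b * r) < exp (- (b - a) * m) * ((r - m) * exp (- a * r))"
    if "r \<noteq> m" for r
  proof -
    have "(r - m) * exp (- b * r) = (r - m) * exp (- (b - a) * r) * exp (- a * r)" by (rule tilt)
    also have "\<dots> < (r - m) * exp (- (b - a) * m) * exp (- a * r)"
      using diff_mult_exp_neg_less[of "b - a" r m] that assms by (intro mult_strict_right_mono) auto
    finally show ?thesis by (simp only: ac_simps)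
  qed
  have "vertical_moment S 1 b - m * vertical_moment S 0 b
          = (\<integral>p. indicator S p * ((snd p - m) * exp (- b * snd p)) \<partial>lborel)"
    using assms by (intro vertical_moment_centered) auto
  also have "\<dots> < (\<integral>p. exp (- (b - a) * m) * (indicator S p * ((snd p - m) * exp (- a * snd p))) \<partial>lborel)"
  proof (rule integral_less_of_less_on_positive_set)
    show "integrable lborel (\<lambda>p. indicator S p * ((snd p - m) * exp (- b * snd p)))"
      using assms by (intro integrable_centered_density) auto
    show "integrable lborel (\<lambda>p. exp (- (b - a) * m) * (indicator S p * ((snd p - m) * exp (- a * snd p))))"
      using assms by (intro integrable_mult_right integrable_centered_density)
    show "indicator S p * ((snd p - m) * exp (- b * snd p))
            \<le> exp (- (b - a) * m) * (indicator S p * ((snd p - m) * exp (- a * snd p)))" for p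
      using tilt_le[of "snd p"] by (simp add: indicator_def)
    show "B \<times> {c<..<c + 1} \<in> sets lborel" by (simp add: Times_in_sets_borel)
    show "emeasure lborel (B \<times> {c<..<c + 1}) \<noteq> 0"
      using B_pos by (simp add: emeasure_lborel_Times)
    show "indicator S p * ((snd p - m) * exp (- b * snd p))
            < exp (- (b - a) * m) * (indicator S p * ((snd p - m) * exp (- a * snd p)))"
      if "p \<in> B \<times> {c<..<c + 1}" for p
    proof -
      have "p \<in> S" "snd p \<noteq> m" using that tail_subset by (auto simp: c_def)
      then show ?thesis using tilt_less[of "snd p"] by simp
    qed
  qed
  also have "\<dots> = exp (- (b - a) * m) * (vertical_moment S 1 a - m * vertical_moment S 0 a)"
    by (simp only: integral_mult_right_zero vertical_moment_centered[OF assms(1)])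
  also have "\<dots> = 0"
    using vertical_moment_pos[OF assms(1)] by (simp add: m_def mean_height_def)
  finally show ?thesis
    using assms by (simp add: mean_height_less_iff m_def)
qed

lemma vertical_moment_nonneg: "0 \<le> vertical_moment S k \<gamma>"
  unfolding vertical_moment_def
  using S_subset by (intro integral_nonneg_AE AE_I2) (auto simp: moment_density_def indicator_def)

lemma vertical_moment_lipschitz:
  assumes "c > 0"
  shows "(vertical_moment S (Suc k) c)-lipschitz_on {c..} (vertical_moment S k)"
proof (rule lipschitz_onI)
  show "0 \<le> vertical_moment S (Suc k) c" by (rule vertical_moment_nonneg)
  fix \<gamma> \<gamma>' assume "\<gamma> \<in> {c..}" "\<gamma>' \<in> {c..}"
  then have \<gamma>: "c \<le> \<gamma>" "c \<le> \<gamma>'" "0 < \<gamma>" "0 < \<gamma>'" using assms by auto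
  have "dist (vertical_moment S k \<gamma>) (vertical_moment S k \<gamma>')
          = \<bar>\<integral>p. moment_density S k \<gamma> p - moment_density S k \<gamma>' p \<partial>lborel\<bar>"
    using integrable_moment_density \<gamma> by (simp add: dist_real_def vertical_moment_def)
  also have "\<dots> \<le> (\<integral>p. dist \<gamma> \<gamma>' * moment_density S (Suc k) c p \<partial>lborel)"
  proof (rule integral_abs_bound_integral)
    show "integrable lborel (\<lambda>p. moment_density S k \<gamma> p - moment_density S k \<gamma>' p)"
      using integrable_moment_density \<gamma> by simp
    show "integrable lborel (\<lambda>p. dist \<gamma> \<gamma>' * moment_density S (Suc k) c p)"
      using integrable_moment_density assms by simp
    fix p :: "'a \<times> real"
    show "\<bar>moment_density S k \<gamma> p - moment_density S k \<gamma>' p\<bar> \<le> dist \<gamma> \<gamma>' * moment_density S (Suc k) c p"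
    proof (cases "p \<in> S")
      case True
      then have r: "0 \<le> snd p" using S_subset by auto
      have "snd p ^ k * \<bar>exp (- \<gamma> * snd p) - exp (- \<gamma>' * snd p)\<bar>
              \<le> snd p ^ k * (\<bar>\<gamma> - \<gamma>'\<bar> * (snd p * exp (- c * snd p)))"
        using abs_exp_neg_mult_diff_le[OF \<gamma>(1,2) r] r by (intro mult_left_mono) auto
      moreover have "moment_density S k \<gamma> p - moment_density S k \<gamma>' p
                       = snd p ^ k * (exp (- \<gamma> * snd p) - exp (- \<gamma>' * snd p))"
        using True by (simp add: moment_density_def right_diff_distrib)
      ultimately show ?thesis
        using True r by (simp add: moment_density_def dist_real_def abs_mult mult_ac)
    qed (simp add: moment_density_def)
  qed
  also have "\<dots> = vertical_moment S (Suc k) c * dist \<gamma> \<gamma>'"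
    by (simp add: vertical_moment_def)
  finally show "dist (vertical_moment S k \<gamma>) (vertical_moment S k \<gamma>')
                  \<le> vertical_moment S (Suc k) c * dist \<gamma> \<gamma>'" .
qed

lemma mean_height_continuous_on:
  assumes "c > 0"
  shows "continuous_on {c..} (mean_height S)"
proof -
  have "vertical_moment S 0 \<gamma> \<noteq> 0" if "\<gamma> \<in> {c..}" for \<gamma>
    using vertical_moment_pos[of \<gamma>] that assms by auto
  then show ?thesis
    unfolding mean_height_def
    using vertical_moment_lipschitz[OF assms, THEN lipschitz_on_continuous_on]
    by (intro continuous_on_divide) auto
qed

text \<open>For small \<open>\<gamma>\<close> the weight is almost flat up to a height where the tail
  \<open>B \<times> {T<..}\<close> outweighs everything of \<open>S\<close> below height \<open>u\<close>.\<close>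

lemma mean_height_exceeds:
  assumes u: "u > 0"
  obtains \<gamma> where "\<gamma> > 0" "u < mean_height S \<gamma>"
proof -
  define M where "M = measure lborel (D \<times> {0..u})"
  define mB where "mB = measure lborel B"
  define c where "c = max (u + 1) T"
  define N where "N = 2 * u * M / mB + 1"
  define \<gamma> where "\<gamma> = ln 2 / (c + N)"
  have D_box_finite: "emeasure lborel (D \<times> {0..u}) < \<infinity>"
    using D_finite u by (simp add: emeasure_lborel_Times ennreal_mult_less_top)
  have mB: "mB > 0" using B_pos B_finite by (simp add: mB_def emeasure_eq_ennreal_measure)
  have "M \<ge> 0" by (simp add: M_def)
  then have N: "N > 0" using mB u by (simp add: N_def add_nonneg_pos)
  have cN: "c + N > 0" using N u by (simp add: c_def)
  have \<gamma>: "\<gamma> > 0" using cN by (simp add: \<gamma>_def)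
  have half: "exp (- \<gamma> * (c + N)) = 1 / 2"
    using cN by (simp add: \<gamma>_def exp_minus)
  have slab: "B \<times> {c<..<c + N} \<subseteq> S" "measure lborel (B \<times> {c<..<c + N}) = mB * N"
    using tail_slab[of c N] N by (auto simp: c_def mB_def)
  have lower: "- u * indicator (D \<times> {0..u}) p + 1 / 2 * indicator (B \<times> {c<..<c + N}) p
                 \<le> indicator S p * ((snd p - u) * exp (- \<gamma> * snd p))" for p
  proof (cases "p \<in> S")
    case False
    then show ?thesis using slab u by (auto simp: indicator_def)
  next
    case True
    then obtain x r where p: "p = (x, r)" and x: "x \<in> D" and r: "0 \<le> r"
      using S_subset by (cases p) auto
    consider "p \<in> B \<times> {c<..<c + N}" | "p \<notin> B \<times> {c<..<c + N}" "r \<le> u"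
      | "p \<notin> B \<times> {c<..<c + N}" "u < r" by fastforce
    then show ?thesis
    proof cases
      case 1
      then have r_slab: "u + 1 < r" "r < c + N" by (auto simp: p c_def)
      have "1 / 2 \<le> exp (- \<gamma> * r)" using r_slab \<gamma> by (simp flip: half)
      then have "1 * (1 / 2) \<le> (r - u) * exp (- \<gamma> * r)"
        using r_slab by (intro mult_mono) auto
      then show ?thesis using 1 True r_slab by (auto simp: p indicator_def)
    next
      case 2
      have "- u \<le> - u * exp (- \<gamma> * r)" using u \<gamma> r by (simp add: mult_le_cancel_left1)
      also have "\<dots> \<le> (r - u) * exp (- \<gamma> * r)" using r by (simp add: algebra_simps)
      finally show ?thesis using 2 True x r by (auto simp: p indicator_def)
    next
      case 3
      then show ?thesis using True by (auto simp: p indicator_def)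
    qed
  qed
  have "0 < - u * M + 1 / 2 * (mB * N)"
    using mB u by (simp add: N_def field_simps)
  also have "\<dots> = (\<integral>p. - u * indicator (D \<times> {0..u}) p + 1 / 2 * indicator (B \<times> {c<..<c + N}) p \<partial>lborel)"
    using D_box_finite slab B_finite N
    by (simp add: M_def measure_def emeasure_lborel_Times ennreal_mult_less_top Times_in_sets_borel)
  also have "\<dots> \<le> vertical_moment S 1 \<gamma> - u * vertical_moment S 0 \<gamma>"
    unfolding vertical_moment_centered[OF \<gamma>]
    using lower D_box_finite B_finite N integrable_centered_density[OF \<gamma>]
    by (intro integral_mono) (auto simp: Times_in_sets_borel emeasure_lborel_Times ennreal_mult_less_top)
  finally show ?thesis using that \<gamma> mean_height_greater_iff by blast
qed

text \<open>For large \<open>\<gamma>\<close> the weight concentrates near the floor, where \<open>S\<close> has positive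
  mass below height \<open>u / 4\<close>; everything above height \<open>u\<close> is controlled by the first
  moment at \<open>\<gamma> = 1\<close>.\<close>

lemma mean_height_below:
  assumes u: "u > 0"
  obtains \<gamma> where "\<gamma> > 0" "mean_height S \<gamma> < u"
proof -
  define A where "A = S \<inter> UNIV \<times> {..u / 4}"
  define mA where "mA = measure lborel A"
  define C where "C = vertical_moment S 1 1"
  define K where "K = 3 * u / 4 * mA"
  define \<gamma> where "\<gamma> = max 1 (4 / (3 * u) * (u + ln ((C + 1) / K)))"
  have A_borel [measurable]: "A \<in> sets borel"
    unfolding A_def by (intro sets.Int Times_in_sets_borel) auto
  have "A \<subseteq> D \<times> {0..u / 4}" using S_subset by (auto simp: A_def)
  then have "emeasure lborel A \<le> emeasure lborel (D \<times> {0..u / 4})"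
    by (intro emeasure_mono) (auto simp: Times_in_sets_borel)
  also have "\<dots> < \<infinity>"
    using D_finite u by (simp add: emeasure_lborel_Times ennreal_mult_less_top)
  finally have A_finite: "emeasure lborel A < \<infinity>" .
  have mA: "mA > 0"
    using bottom_pos[of "u / 4"] u A_finite by (simp add: mA_def A_def emeasure_eq_ennreal_measure)
  have C: "C \<ge> 0" by (simp add: C_def vertical_moment_nonneg)
  have K: "K > 0" using u mA by (simp add: K_def)
  have \<gamma>: "1 \<le> \<gamma>" by (simp add: \<gamma>_def)
  then have \<gamma>_pos: "0 < \<gamma>" by simp
  have small: "exp (u - 3 * u / 4 * \<gamma>) * C < K"
  proof -
    have "3 * u / 4 * (4 / (3 * u) * (u + ln ((C + 1) / K))) \<le> 3 * u / 4 * \<gamma>"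
      using u by (intro mult_left_mono) (auto simp: \<gamma>_def)
    then have "u + ln ((C + 1) / K) \<le> 3 * u / 4 * \<gamma>"
      using u by simp
    moreover have "ln ((C + 1) / K) = - ln (K / (C + 1))"
      using C K by (simp add: ln_div)
    ultimately have "exp (u - 3 * u / 4 * \<gamma>) \<le> exp (ln (K / (C + 1)))"
      by simp
    also have "\<dots> = K / (C + 1)" using C K by simp
    finally have "exp (u - 3 * u / 4 * \<gamma>) \<le> K / (C + 1)" .
    then have "exp (u - 3 * u / 4 * \<gamma>) * C \<le> K / (C + 1) * C"
      using C by (rule mult_right_mono)
    also have "\<dots> < K" using C K by (simp add: field_simps)
    finally show ?thesis .
  qed
  have upper: "indicator S p * ((snd p - u) * exp (- \<gamma> * snd p))
                 \<le> - (3 * u / 4) * exp (- \<gamma> * (u / 4)) * indicator A p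
                    + exp (- (\<gamma> - 1) * u) * moment_density S 1 1 p" for p
  proof (cases "p \<in> S")
    case False
    then show ?thesis by (simp add: A_def moment_density_def)
  next
    case True
    then obtain x r where p: "p = (x, r)" and r: "0 \<le> r"
      using S_subset by (cases p) auto
    have tail_nonneg: "0 \<le> exp (- (\<gamma> - 1) * u) * moment_density S 1 1 p"
      using True r by (simp add: moment_density_def p)
    consider "r \<le> u / 4" | "u / 4 < r" "r \<le> u" | "u < r" by fastforce
    then show ?thesis
    proof cases
      case 1
      have "(r - u) * exp (- \<gamma> * r) \<le> - (3 * u / 4) * exp (- \<gamma> * r)"
        using 1 by (intro mult_right_mono) auto
      also have "\<dots> \<le> - (3 * u / 4) * exp (- \<gamma> * (u / 4))"
        using 1 u \<gamma> by (intro mult_left_mono_neg) auto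
      finally show ?thesis using 1 True tail_nonneg by (simp add: p A_def)
    next
      case 2
      then have "(r - u) * exp (- \<gamma> * r) \<le> 0" by (simp add: mult_nonpos_nonneg)
      then show ?thesis using 2 True tail_nonneg u by (simp add: p A_def)
    next
      case 3
      have "(r - u) * exp (- \<gamma> * r) \<le> r * exp (- r) * exp (- (\<gamma> - 1) * r)"
        using u r by (simp add: mult_right_mono algebra_simps flip: exp_add)
      also have "\<dots> \<le> r * exp (- r) * exp (- (\<gamma> - 1) * u)"
        using 3 \<gamma> r by (intro mult_left_mono) (auto intro: mult_left_mono_neg)
      finally show ?thesis using 3 True u by (simp add: p A_def moment_density_def mult_ac)
    qed
  qed
  have "vertical_moment S 1 \<gamma> - u * vertical_moment S 0 \<gamma>
          \<le> (\<integral>p. - (3 * u / 4) * exp (- \<gamma> * (u / 4)) * indicator A p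
                 + exp (- (\<gamma> - 1) * u) * moment_density S 1 1 p \<partial>lborel)"
    unfolding vertical_moment_centered[OF \<gamma>_pos]
  proof (rule integral_mono)
    show "integrable lborel (\<lambda>p. indicator S p * ((snd p - u) * exp (- \<gamma> * snd p)))"
      using \<gamma>_pos by (rule integrable_centered_density)
    show "integrable lborel (\<lambda>p. - (3 * u / 4) * exp (- \<gamma> * (u / 4)) * indicator A p
                                 + exp (- (\<gamma> - 1) * u) * moment_density S 1 1 p)"
      using A_finite integrable_moment_density[of 1 1] by simp
  qed (rule upper)
  also have "\<dots> = - (3 * u / 4) * exp (- \<gamma> * (u / 4)) * mA + exp (- (\<gamma> - 1) * u) * C"
    using A_finite integrable_moment_density[of 1 1]
    by (simp add: mA_def C_def vertical_moment_def)
  also have "\<dots> = exp (- \<gamma> * (u / 4)) * (exp (u - 3 * u / 4 * \<gamma>) * C - K)"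
    by (simp add: K_def algebra_simps flip: exp_add)
  also have "\<dots> < 0" using small by (simp add: mult_pos_neg)
  finally have "mean_height S \<gamma> < u"
    using mean_height_less_iff[OF \<gamma>_pos] by simp
  with \<gamma>_pos show ?thesis by (rule that)
qed

lemma mean_height_eq_unique:
  assumes "u > 0"
  shows "\<exists>!\<gamma>. \<gamma> > 0 \<and> u = mean_height S \<gamma>"
proof (rule ex_ex1I)
  obtain \<gamma>\<^sub>1 where \<gamma>\<^sub>1: "\<gamma>\<^sub>1 > 0" "u < mean_height S \<gamma>\<^sub>1"
    using mean_height_exceeds[OF assms] .
  obtain \<gamma>\<^sub>2 where \<gamma>\<^sub>2: "\<gamma>\<^sub>2 > 0" "mean_height S \<gamma>\<^sub>2 < u"
    using mean_height_below[OF assms] .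
  have "\<gamma>\<^sub>1 \<le> \<gamma>\<^sub>2"
    using mean_height_strict_antimono[of \<gamma>\<^sub>2 \<gamma>\<^sub>1] \<gamma>\<^sub>1 \<gamma>\<^sub>2 by force
  moreover have "continuous_on {\<gamma>\<^sub>1..\<gamma>\<^sub>2} (mean_height S)"
    using mean_height_continuous_on[OF \<gamma>\<^sub>1(1)] by (rule continuous_on_subset) auto
  ultimately obtain \<gamma> where "\<gamma>\<^sub>1 \<le> \<gamma>" "mean_height S \<gamma> = u"
    using IVT2'[of "mean_height S" \<gamma>\<^sub>2 u \<gamma>\<^sub>1] \<gamma>\<^sub>1 \<gamma>\<^sub>2 by force
  then show "\<exists>\<gamma>. \<gamma> > 0 \<and> u = mean_height S \<gamma>"
    using \<gamma>\<^sub>1 by (intro exI[of _ \<gamma>]) auto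
next
  fix \<gamma> \<gamma>' assume "\<gamma> > 0 \<and> u = mean_height S \<gamma>" "\<gamma>' > 0 \<and> u = mean_height S \<gamma>'"
  then show "\<gamma> = \<gamma>'"
    using mean_height_strict_antimono[of \<gamma> \<gamma>'] mean_height_strict_antimono[of \<gamma>' \<gamma>]
    by (cases \<gamma> \<gamma>' rule: linorder_cases) auto
qed

end

lemma hk_eq_vertical_moment:
  "hk Db R xt k \<gamma> y = \<gamma> * vertical_moment (cyl Db - ball (xt, y) R) k \<gamma>"
proof -
  have "hk Db R xt k \<gamma> y = (\<integral>p. moment_density (cyl Db - ball (xt, y) R) k \<gamma> p * \<gamma> \<partial>lborel)"
    unfolding hk_def set_lebesgue_integral_def
    by (intro Bochner_Integration.integral_cong) (auto simp: moment_density_def split_beta)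
  then show ?thesis by (simp add: vertical_moment_def mult.commute)
qed

lemma uu_eq_mean_height:
  "\<gamma> \<noteq> 0 \<Longrightarrow> uu Db R xt \<gamma> y = mean_height (cyl Db - ball (xt, y) R) \<gamma>"
  by (simp add: uu_def mean_height_def hk_eq_vertical_moment)

lemma ball_subset_of_mem_Db':
  assumes "R > 0" "xt \<in> Db' Db R"
  shows "ball xt R \<subseteq> Db"
proof
  fix x assume "x \<in> ball xt R"
  then have "(x, R + 1) \<in> ball (xt, R + 1) R" by (simp add: dist_Pair_Pair)
  moreover have "ball (xt, R + 1) R \<subseteq> cyl Db" using assms by (auto simp: Db'_def)
  ultimately show "x \<in> Db" by (auto simp: cyl_def)
qed

lemma annulus_layer_subset_cyl_minus_ball:
  assumes "ball xt R \<subseteq> Db" "R \<le> y" "0 \<le> \<epsilon>" "\<epsilon> \<le> R"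
  shows "(ball xt R - cball xt (sqrt (2 * R * \<epsilon>))) \<times> {0..\<epsilon>} \<subseteq> cyl Db - ball (xt, y) R"
proof clarify
  fix x r assume x: "x \<in> ball xt R" "x \<notin> cball xt (sqrt (2 * R * \<epsilon>))" and r: "r \<in> {0..\<epsilon>}"
  have "(sqrt (2 * R * \<epsilon>))\<^sup>2 \<le> (dist xt x)\<^sup>2"
    using x assms by (intro power_mono) auto
  then have "2 * R * \<epsilon> \<le> (dist xt x)\<^sup>2"
    using assms by simp
  moreover have "(R - \<epsilon>)\<^sup>2 \<le> (dist y r)\<^sup>2"
    using r assms by (simp add: dist_real_def power_mono)
  ultimately have "R\<^sup>2 \<le> (dist (xt, y) (x, r))\<^sup>2"
    using assms mult_nonneg_nonneg[of \<epsilon> \<epsilon>]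
    by (simp add: dist_Pair_Pair power2_eq_square algebra_simps; linarith)
  then have "R \<le> dist (xt, y) (x, r)"
    using assms by (simp add: power2_le_iff_abs_le)
  then show "(x, r) \<in> cyl Db - ball (xt, y) R"
    using x r assms by (auto simp: cyl_def)
qed

lemma cyl_minus_ball_tailed_region:
  fixes Db :: "(real^'n::finite) set"
  assumes R: "R > 0" and Db: "Db \<in> sets borel" "emeasure lborel Db < \<infinity>"
    and ball: "ball xt R \<subseteq> Db" and y: "R \<le> y"
  shows "tailed_region (cyl Db - ball (xt, y) R) Db (ball xt R) (y + R)"
proof
  show "cyl Db - ball (xt, y) R \<in> sets borel"
    unfolding cyl_def using Db by (intro sets.Diff Times_in_sets_borel) auto
  show "cyl Db - ball (xt, y) R \<subseteq> Db \<times> {0..}" by (auto simp: cyl_def)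
  show "Db \<in> sets borel" "emeasure lborel Db < \<infinity>" by (fact Db)+
  show "ball xt R \<in> sets borel" by simp
  show "0 < emeasure lborel (ball xt R)"
    using content_ball_pos[OF R, of xt] emeasure_lborel_ball_finite[of xt R]
    by (simp add: emeasure_eq_ennreal_measure)
  show "ball xt R \<times> {y + R<..} \<subseteq> cyl Db - ball (xt, y) R"
  proof clarify
    fix x r assume x: "x \<in> ball xt R" and r: "y + R < r"
    have "R < dist y r" using r by (simp add: dist_real_def)
    also have "\<dots> \<le> dist (xt, y) (x, r)" using dist_snd_le[of "(xt, y)" "(x, r)"] by simp
    finally show "(x, r) \<in> cyl Db - ball (xt, y) R" using x r ball R y by (auto simp: cyl_def)
  qed
  fix e :: real assume e: "e > 0"
  define \<epsilon> where "\<epsilon> = min e (R / 4)"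
  define \<rho> where "\<rho> = sqrt (2 * R * \<epsilon>)"
  have \<epsilon>: "0 < \<epsilon>" "\<epsilon> \<le> e" "\<epsilon> \<le> R / 4" using e R by (auto simp: \<epsilon>_def)
  have \<rho>: "0 \<le> \<rho>" "\<rho> < R"
    using \<epsilon> R real_sqrt_less_mono[of "2 * R * \<epsilon>" "R\<^sup>2"] by (auto simp: \<rho>_def power2_eq_square)
  have "0 < emeasure lborel ((ball xt R - cball xt \<rho>) \<times> {0..\<epsilon>})"
    using emeasure_annulus_pos[OF \<rho>] \<epsilon>
    by (simp add: emeasure_lborel_Times ennreal_zero_less_mult_iff)
  also have "\<dots> \<le> emeasure lborel ((cyl Db - ball (xt, y) R) \<inter> UNIV \<times> {..e})"
    using annulus_layer_subset_cyl_minus_ball[OF ball y, of \<epsilon>] \<epsilon> R \<open>cyl Db - ball (xt, y) R \<in> sets borel\<close>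
    by (intro emeasure_mono) (auto simp: \<rho>_def Times_in_sets_borel)
  finally show "0 < emeasure lborel ((cyl Db - ball (xt, y) R) \<inter> UNIV \<times> {..e})" .
qed

theorem lemma5p2:
  fixes Db :: "(real^'n::finite) set" and R :: real and xt :: "real^'n"
  assumes "R > 0"
    and "open Db" and "connected Db" and "Db \<noteq> {}" and "bounded Db"
    and "smooth_boundary Db"
    and "inner_ball_condition Db R"
    and "\<exists>z. cball z R \<subseteq> interior (cyl Db)"
    and "xt \<in> Db' Db R"
  shows "(\<forall>y\<ge>R. \<forall>a b. 0 < a \<longrightarrow> a < b \<longrightarrow> uu Db R xt b y < uu Db R xt a y)
       \<and> (\<forall>u>0. \<forall>y\<ge>R. \<exists>!lam. lam > 0 \<and> u = uu Db R xt lam y)"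
proof -
  \<comment> \<open>Of the hypotheses on \<open>Db\<close> only openness and boundedness are needed: membership of
    \<open>xt\<close> in \<open>Db' Db R\<close> already puts \<open>ball xt R\<close> inside \<open>Db\<close>.\<close>
  have region: "tailed_region (cyl Db - ball (xt, y) R) Db (ball xt R) (y + R)" if "R \<le> y" for y
    using assms(1,2,5,9) that
    by (intro cyl_minus_ball_tailed_region ball_subset_of_mem_Db' emeasure_bounded_finite) auto
  have uu_iff: "(\<gamma> > 0 \<and> u = uu Db R xt \<gamma> y)
                  \<longleftrightarrow> (\<gamma> > 0 \<and> u = mean_height (cyl Db - ball (xt, y) R) \<gamma>)" for \<gamma> u y
    by (auto simp: uu_eq_mean_height)
  show ?thesis
  proof (intro conjI allI impI)
    fix y a b :: real assume "R \<le> y" "0 < a" "a < b"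
    then show "uu Db R xt b y < uu Db R xt a y"
      using tailed_region.mean_height_strict_antimono[OF region] by (simp add: uu_eq_mean_height)
  next
    fix u y :: real assume "0 < u" "R \<le> y"
    then show "\<exists>!lam. lam > 0 \<and> u = uu Db R xt lam y"
      unfolding uu_iff using tailed_region.mean_height_eq_unique[OF region] by blast
  qed
qed

end
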